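(* Consider the energy-harvesting model described in the context, with parameters $p\in(0,1)$, $\gamma>0$, $B>0$, $w\in\mathbb{N}$. Let $\pi^*(w)$ be an optimal look-ahead policy of the stationary form described in the context, with induced sequence $(\xi_j^* )_{j\ge1}$. Then $\Gamma^*=\mathcal{T}_\infty(\xi_1^*,\xi_2^*,\dots)$.
   Context: Model: a transmitter sends over an AWGN channel with constant gain $\gamma>0$ in discrete time slots $\tau\in\mathbb{N}$; the reward of sending energy $a$ in a slot is $\frac12\log_2(1+\gamma a)$. The transmitter has a battery of capacity $B>0$. Energy arrivals $E_1,E_2,\dots$ are i.i.d. with $\Pr(E_\tau=B)=p$, $\Pr(E_\tau=0)=1-p$, where $0<p<1$. The battery level satisfies $B_1=B$ (the optimal value does not depend on the initial level) and $B_\tau=\min\{B_{\tau-1}-A_{\tau-1}+E_\tau,\,B\}$, where the action $A_\tau$ (energy spent at time $\tau$) must satisfy $0\le A_\tau\le B_\tau$. The transmitter has look-ahead window $w\in\mathbb{N}$: at time $\tau$ it knows $E_1,\dots,E_{\tau+w}$ (and $B_1$), and a (look-ahead) policy $\pi(w)$ is a sequence of (possibly randomized) action functions $A_\tau=\mathcal{A}_\tau((E_t)_{t=1}^{\tau+w},B_1)$. Its $T$-horizon average throughput is $\Gamma_T^{\pi(w)}=\frac1T\mathbb{E}\sum_{\tau=1}^T\frac12\log_2(1+\gamma A_\tau)$, and $\Gamma^*=\sup_{\pi(w)}\liminf_{T\to\infty}\Gamma_T^{\pi(w)}$. An optimal policy exists that is deterministic, Markovian and stationary; for the Bernoulli arrivals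 it can be taken of the following form: let $d_\tau=\min\{t\in\{1,\dots,w\}:E_{\tau+t}=B\}$ if this set is nonempty and $d_\tau=0$ otherwise; then $a_\tau=b_\tau/d_\tau$ if $d_\tau\neq0$, and $a_\tau=\mathcal{A}(b_\tau)$ if $d_\tau=0$, for some fixed function $\mathcal{A}$ with $0\le\mathcal{A}(b)\le b$. The sequence induced by such a policy is $\xi_j^*=\mathcal{A}(b_j)$, where $b_1=B$ and $b_{j+1}=b_j-\xi_j^*$. A nonnegative sequence $(x_j)_{j\ge1}$ is admissible if $\sum_j x_j\le B$. For an admissible sequence, $$\mathcal{T}_\infty(x_1,x_2,\dots)=\sum_{k=1}^{w}p^2(1-p)^{k-1}\frac{k}{2}\log_2\!\Big(1+\gamma\frac{B}{k}\Big)+\sum_{j=1}^{\infty}p(1-p)^{j+w-1}\frac12\log_2(1+\gamma x_j)+\sum_{k=1}^{\infty}p^2(1-p)^{k+w-1}\frac{w}{2}\log_2\!\Big(1+\gamma\frac{B-\sum_{j=1}^{k}x_j}{w}\Big).$$ *)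

theory Defs
  imports "HOL-Probability.Probability"
begin

text \<open>Energy arrivals are encoded as a Boolean sequence e :: nat => bool, where
  e t = True means E_t = B and e t = False means E_t = 0 (time slots start at 1;
  the value e 0 is never used).\<close>

definition arrival :: "real \<Rightarrow> (nat \<Rightarrow> bool) \<Rightarrow> nat \<Rightarrow> real" where
  "arrival B e t = (if e t then B else 0)"

text \<open>Battery level: batt B e a n is the battery level B_(n+1) at time slot n+1,
  given arrivals e and energies a t spent at slots t.  B_1 = B and
  B_(tau+1) = min (B_tau - A_tau + E_(tau+1)) B.\<close>

fun batt :: "real \<Rightarrow> (nat \<Rightarrow> bool) \<Rightarrow> (nat \<Rightarrow> real) \<Rightarrow> nat \<Rightarrow> real" where
  "batt B e a 0 = B"
| "batt B e a (Suc n) = min (batt B e a n - a (Suc n) + arrival B e (Suc (Suc n))) B"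

definition arrivals_measure :: "real \<Rightarrow> (nat \<Rightarrow> bool) measure" where
  "arrivals_measure p = PiM UNIV (\<lambda>_. measure_pmf (bernoulli_pmf p))"

text \<open>A (possibly randomized) look-ahead policy with window w: a probability measure
  Q on a real-valued random seed (independent of the arrivals), and action functions
  A tau e s.\<close>

definition is_policy ::
  "real \<Rightarrow> nat \<Rightarrow> (nat \<Rightarrow> (nat \<Rightarrow> bool) \<Rightarrow> real \<Rightarrow> real) \<Rightarrow> real measure \<Rightarrow> bool" where
  "is_policy B w A Q \<longleftrightarrow>
     prob_space Q \<and> sets Q = sets borel \<and>
     (\<forall>\<tau> e e' s. (\<forall>t\<in>{1..\<tau>+w}. e t = e' t) \<longrightarrow> A \<tau> e s = A \<tau> e' s) \<and>
     (\<forall>\<tau> e. (\<lambda>s. A \<tau> e s) \<in> borel_measurable Q) \<and>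
     (\<forall>\<tau>\<ge>1. \<forall>e s. 0 \<le> A \<tau> e s \<and> A \<tau> e s \<le> batt B e (\<lambda>t. A t e s) (\<tau> - 1))"

definition avg_throughput ::
  "real \<Rightarrow> real \<Rightarrow> (nat \<Rightarrow> (nat \<Rightarrow> bool) \<Rightarrow> real \<Rightarrow> real) \<Rightarrow> real measure \<Rightarrow> nat \<Rightarrow> real" where
  "avg_throughput p \<gamma> A Q T =
     (1 / real T) * (\<integral>x. (\<Sum>\<tau>=1..T. (1/2) * log 2 (1 + \<gamma> * A \<tau> (fst x) (snd x)))
                          \<partial>(arrivals_measure p \<Otimes>\<^sub>M Q))"

definition long_run_throughput ::
  "real \<Rightarrow> real \<Rightarrow> (nat \<Rightarrow> (nat \<Rightarrow> bool) \<Rightarrow> real \<Rightarrow> real) \<Rightarrow> real measure \<Rightarrow> ereal" where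
  "long_run_throughput p \<gamma> A Q = liminf (\<lambda>T. ereal (avg_throughput p \<gamma> A Q T))"

definition opt_throughput :: "real \<Rightarrow> real \<Rightarrow> real \<Rightarrow> nat \<Rightarrow> ereal" where
  "opt_throughput p \<gamma> B w =
     (SUP AQ \<in> {(A, Q). is_policy B w A Q}. long_run_throughput p \<gamma> (fst AQ) (snd AQ))"

definition first_arrival :: "nat \<Rightarrow> (nat \<Rightarrow> bool) \<Rightarrow> nat \<Rightarrow> nat" where
  "first_arrival w e \<tau> =
     (if \<exists>t\<in>{1..w}. e (\<tau> + t) then (LEAST t. 1 \<le> t \<and> e (\<tau> + t)) else 0)"

text \<open>The stationary policy determined by the function Af: battery (shifted index,
  stat_batt n = b_(n+1)) and action (stat_act n = a_(n+1)).\<close>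

fun stat_batt :: "real \<Rightarrow> nat \<Rightarrow> (real \<Rightarrow> real) \<Rightarrow> (nat \<Rightarrow> bool) \<Rightarrow> nat \<Rightarrow> real" where
  "stat_batt B w Af e 0 = B"
| "stat_batt B w Af e (Suc n) =
     (let b = stat_batt B w Af e n; d = first_arrival w e (Suc n);
          a = (if d \<noteq> 0 then b / real d else Af b)
      in min (b - a + arrival B e (Suc (Suc n))) B)"

definition stat_policy ::
  "real \<Rightarrow> nat \<Rightarrow> (real \<Rightarrow> real) \<Rightarrow> nat \<Rightarrow> (nat \<Rightarrow> bool) \<Rightarrow> real \<Rightarrow> real" where
  "stat_policy B w Af \<tau> e s =
     (let b = stat_batt B w Af e (\<tau> - 1); d = first_arrival w e \<tau>
      in if d \<noteq> 0 then b / real d else Af b)"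

text \<open>Induced sequence xi^*_j = Af(b_j), b_1 = B, b_(j+1) = b_j - xi^*_j
  (indexed from 1; xi_seq Af B 0 is unused).\<close>

fun xi_batt :: "(real \<Rightarrow> real) \<Rightarrow> real \<Rightarrow> nat \<Rightarrow> real" where
  "xi_batt Af B 0 = B"
| "xi_batt Af B (Suc n) = xi_batt Af B n - Af (xi_batt Af B n)"

definition xi_seq :: "(real \<Rightarrow> real) \<Rightarrow> real \<Rightarrow> nat \<Rightarrow> real" where
  "xi_seq Af B j = Af (xi_batt Af B (j - 1))"

definition T_inf :: "real \<Rightarrow> real \<Rightarrow> real \<Rightarrow> nat \<Rightarrow> (nat \<Rightarrow> real) \<Rightarrow> real" where
  "T_inf p \<gamma> B w x =
     (\<Sum>k=1..w. p^2 * (1-p)^(k-1) * (real k / 2) * log 2 (1 + \<gamma> * B / real k))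
   + (\<Sum>n. p * (1-p)^(Suc n + w - 1) * (1/2) * log 2 (1 + \<gamma> * x (Suc n)))
   + (\<Sum>n. p^2 * (1-p)^(Suc n + w - 1) * (real w / 2)
            * log 2 (1 + \<gamma> * (B - (\<Sum>j=1..Suc n. x j)) / real w))"

end

theory Submission
  imports Defs
begin

text \<open>Under the stationary policy the situation at slot n + 1 is described by two numbers: the
  age i (slots since the battery was last full) and the lead m (distance to the next arrival
  inside the window, w + 1 if there is none). The battery and the action are explicit functions
  of (i, m), and (i, m) occurs with probability p^([i < n] + [m \<le> w]) * (1 - p)^(i + m - 1).
  Hence the expected reward of slot n + 1 converges geometrically fast to a limit L, the averages
  Gamma_T converge to L, and regrouping the double series for L by the gap length i + m turns it
  into T_inf of the sequence xi. Optimality of the policy gives Gamma^* = L.\<close>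

definition arrival_pattern :: "nat set \<Rightarrow> nat set \<Rightarrow> (nat \<Rightarrow> bool) set" where
  "arrival_pattern A C = {e. (\<forall>t\<in>A. e t) \<and> (\<forall>t\<in>C. \<not> e t)}"

lemma prob_space_arrivals_measure: "prob_space (arrivals_measure p)"
  unfolding arrivals_measure_def by (intro prob_space_PiM measure_pmf.prob_space_axioms)

lemma space_arrivals_measure: "space (arrivals_measure p) = UNIV"
  by (simp add: arrivals_measure_def space_PiM PiE_UNIV_domain)

lemma arrival_pattern_eq_prod_emb:
  assumes "A \<inter> C = {}"
  shows "arrival_pattern A C =
    prod_emb UNIV (\<lambda>_. measure_pmf (bernoulli_pmf p)) (A \<union> C)
      (\<Pi>\<^sub>E t\<in>A \<union> C. if t \<in> A then {True} else {False})"
  using assms by (auto simp: arrival_pattern_def prod_emb_def PiE_iff split: if_splits; blast)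

lemma arrival_pattern_sets:
  assumes "finite A" "finite C" "A \<inter> C = {}"
  shows "arrival_pattern A C \<in> sets (arrivals_measure p)"
  unfolding arrival_pattern_eq_prod_emb[OF assms(3), of p] arrivals_measure_def
  by (rule sets_PiM_I) (use assms in auto)

lemma measure_arrival_pattern:
  assumes "0 \<le> p" "p \<le> 1" "finite A" "finite C" "A \<inter> C = {}"
  shows "measure (arrivals_measure p) (arrival_pattern A C) = p ^ card A * (1 - p) ^ card C"
proof -
  interpret product_prob_space "\<lambda>_::nat. measure_pmf (bernoulli_pmf p)" UNIV
    by unfold_locales
  let ?P = "\<lambda>t. measure (measure_pmf (bernoulli_pmf p)) (if t \<in> A then {True} else {False})"
  have "measure (arrivals_measure p) (arrival_pattern A C) = (\<Prod>t\<in>A \<union> C. ?P t)"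
    unfolding arrival_pattern_eq_prod_emb[OF assms(5), of p] arrivals_measure_def
    by (rule measure_PiM_emb) (use assms in auto)
  also have "\<dots> = (\<Prod>t\<in>A. ?P t) * (\<Prod>t\<in>C. ?P t)"
    by (rule prod.union_disjoint) (use assms in auto)
  also have "\<dots> = (\<Prod>t\<in>A. p) * (\<Prod>t\<in>C. 1 - p)"
    using assms by (intro arg_cong2[where f = "(*)"] prod.cong) (auto simp: measure_pmf_single)
  finally show ?thesis by simp
qed

lemma averages_tendsto_of_summable_abs_diff:
  fixes X :: "nat \<Rightarrow> real"
  assumes "summable (\<lambda>n. \<bar>X n - L\<bar>)"
  shows "(\<lambda>T. (\<Sum>n<T. X n) / real T) \<longlonglongrightarrow> L"
proof -
  define S where "S = (\<Sum>n. \<bar>X n - L\<bar>)"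
  have "\<bar>(\<Sum>n<T. X n) / real T - L\<bar> \<le> S / real T" if "T \<ge> 1" for T
  proof -
    have "\<bar>(\<Sum>n<T. X n) / real T - L\<bar> = \<bar>\<Sum>n<T. X n - L\<bar> / real T"
      using that by (simp add: sum_subtractf abs_divide field_simps)
    also have "\<dots> \<le> (\<Sum>n<T. \<bar>X n - L\<bar>) / real T"
      by (intro divide_right_mono sum_abs) auto
    also have "\<dots> \<le> S / real T"
      unfolding S_def by (intro divide_right_mono sum_le_suminf assms) auto
    finally show ?thesis .
  qed
  then have "(\<lambda>T. (\<Sum>n<T. X n) / real T - L) \<longlonglongrightarrow> 0"
    by (intro Lim_null_comparison[OF _ lim_const_over_n[of S]])
      (auto simp: eventually_sequentially)
  then show ?thesis by (simp add: LIM_zero_iff)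
qed

lemma sum_segments_eq_weighted_sum:
  "(\<Sum>m\<in>{1..w}. \<Sum>i<w+1-m. f (i + m)) = (\<Sum>k\<in>{1..w}. real k * f k :: real)"
proof (induction w)
  case (Suc w)
  have "(\<Sum>i<Suc w+1-m. f (i + m)) = (\<Sum>i<w+1-m. f (i + m)) + f (Suc w)" if "m \<in> {1..w}" for m
  proof -
    have "Suc w + 1 - m = Suc (w + 1 - m)" "w + 1 - m + m = Suc w" using that by auto
    then show ?thesis by simp
  qed
  then have "(\<Sum>m\<in>{1..w}. \<Sum>i<Suc w+1-m. f (i + m))
      = (\<Sum>m\<in>{1..w}. \<Sum>i<w+1-m. f (i + m)) + real w * f (Suc w)"
    by (simp add: sum.distrib)
  then show ?case
    unfolding Suc.IH by (simp add: atLeastAtMostSuc_conv algebra_simps)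
qed simp

lemma suminf_window_sum:
  fixes f :: "nat \<Rightarrow> real"
  assumes "summable f"
  shows "(\<Sum>i. \<Sum>m\<in>{1..w}. f (i + m)) = (\<Sum>k\<in>{1..w}. real k * f k) + real w * (\<Sum>n. f (n + w + 1))"
proof -
  have "(\<Sum>i. f (i + m)) = (\<Sum>n. f (n + w + 1)) + (\<Sum>i<w+1-m. f (i + m))" if "m \<in> {1..w}" for m
  proof -
    have "(\<Sum>i. f (i + m)) = (\<Sum>n. f (n + (w + 1 - m) + m)) + (\<Sum>i<w+1-m. f (i + m))"
      by (intro suminf_split_initial_segment summable_ignore_initial_segment assms)
    moreover have "n + (w + 1 - m) + m = n + w + 1" for n using that by auto
    ultimately show ?thesis by simp
  qed
  then have "(\<Sum>m\<in>{1..w}. \<Sum>i. f (i + m))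
      = (\<Sum>m\<in>{1..w}. \<Sum>n. f (n + w + 1)) + (\<Sum>m\<in>{1..w}. \<Sum>i<w+1-m. f (i + m))"
    by (simp add: sum.distrib)
  moreover have "(\<Sum>i. \<Sum>m\<in>{1..w}. f (i + m)) = (\<Sum>m\<in>{1..w}. \<Sum>i. f (i + m))"
    by (intro suminf_sum summable_ignore_initial_segment assms)
  ultimately show ?thesis using sum_segments_eq_weighted_sum[of f w] by simp
qed

definition awgn_rate :: "real \<Rightarrow> real \<Rightarrow> real" where
  "awgn_rate \<gamma> x = (1/2) * log 2 (1 + \<gamma> * x)"

lemma awgn_rate_bounds:
  assumes "0 \<le> \<gamma>" "0 \<le> x" "x \<le> y"
  shows "0 \<le> awgn_rate \<gamma> x \<and> awgn_rate \<gamma> x \<le> awgn_rate \<gamma> y"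
proof -
  have "1 \<le> 1 + \<gamma> * x" "1 + \<gamma> * x \<le> 1 + \<gamma> * y"
    using assms by (simp_all add: mult_left_mono)
  then show ?thesis by (simp add: awgn_rate_def)
qed

lemma sum_geometric_weights: "(\<Sum>m\<in>{1..k}. p * (1 - p) ^ (m - 1)) = 1 - (1 - p) ^ k" for p :: real
  by (induction k) (auto simp: atLeastAtMostSuc_conv algebra_simps)

lemma first_arrival_eqI:
  assumes "1 \<le> m" "m \<le> w + 1" "\<And>t. 1 \<le> t \<Longrightarrow> t < m \<Longrightarrow> \<not> e (\<tau> + t)"
    and "m \<le> w \<Longrightarrow> e (\<tau> + m)"
  shows "first_arrival w e \<tau> = (if m \<le> w then m else 0)"
proof (cases "m \<le> w")
  case True
  have "(LEAST t. 1 \<le> t \<and> e (\<tau> + t)) = m"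
    using assms True by (intro Least_equality) (auto simp: not_le[symmetric])
  moreover have "\<exists>t\<in>{1..w}. e (\<tau> + t)" using True assms by auto
  ultimately show ?thesis using True by (simp add: first_arrival_def)
next
  case False
  then have "\<not> (\<exists>t\<in>{1..w}. e (\<tau> + t))" using assms by fastforce
  then show ?thesis using False by (simp add: first_arrival_def)
qed

lemma stat_batt_Suc_eq_policy:
  "stat_batt B w Af e (Suc n) =
     min (stat_batt B w Af e n - stat_policy B w Af (Suc n) e s + arrival B e (Suc (Suc n))) B"
  by (simp add: stat_policy_def Let_def)

locale stationary_policy =
  fixes B :: real and w :: nat and Af :: "real \<Rightarrow> real"
  assumes B_nonneg: "0 \<le> B" and w_pos: "1 \<le> w"
    and Af_bounds: "\<And>b. 0 \<le> b \<Longrightarrow> 0 \<le> Af b \<and> Af b \<le> b"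
begin

lemma policy_action_bounds:
  assumes "0 \<le> b"
  shows "0 \<le> (if d \<noteq> 0 then b / real d else Af b) \<and> (if d \<noteq> 0 then b / real d else Af b) \<le> b"
proof (cases "d = 0")
  case False
  then have "b / real d \<le> b" using assms by (simp add: divide_le_eq mult_le_cancel_left1)
  then show ?thesis using False assms by simp
qed (use Af_bounds[OF assms] in simp)

lemma stat_batt_bounds: "0 \<le> stat_batt B w Af e n \<and> stat_batt B w Af e n \<le> B"
proof (induction n)
  case (Suc n)
  then show ?case
    using policy_action_bounds[of "stat_batt B w Af e n" "first_arrival w e (Suc n)"] B_nonneg
    by (auto simp: Let_def arrival_def)
qed (use B_nonneg in simp)

lemma stat_policy_le_stat_batt: "stat_policy B w Af (Suc n) e s \<le> stat_batt B w Af e n"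
  using policy_action_bounds[of "stat_batt B w Af e n" "first_arrival w e (Suc n)"] stat_batt_bounds
  by (simp add: stat_policy_def Let_def)

lemma stat_batt_Suc_arrival: "e (Suc (Suc n)) \<Longrightarrow> stat_batt B w Af e (Suc n) = B"
  using stat_policy_le_stat_batt[of n e 0]
  unfolding stat_batt_Suc_eq_policy[where s = 0] by (simp add: arrival_def)

lemma stat_batt_Suc_no_arrival:
  "\<not> e (Suc (Suc n)) \<Longrightarrow>
     stat_batt B w Af e (Suc n) = min (stat_batt B w Af e n - stat_policy B w Af (Suc n) e s) B"
  unfolding stat_batt_Suc_eq_policy[where s = s] by (simp add: arrival_def)

lemma xi_batt_bounds: "0 \<le> xi_batt Af B n \<and> xi_batt Af B n \<le> B"
proof (induction n)
  case (Suc n)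
  then show ?case using Af_bounds[of "xi_batt Af B n"] by simp
qed (use B_nonneg in simp)

lemma xi_batt_eq_diff_sum: "xi_batt Af B n = B - (\<Sum>j=1..n. xi_seq Af B j)"
  by (induction n) (auto simp: xi_seq_def)

text \<open>If the battery is refilled and the next arrival comes K slots later, the policy spends
  gap_rate K per slot during the last min K w of these slots: B / K if the arrival is already
  visible at the refill (K \<le> w), otherwise the charge xi_batt (K - w) that Af leaves after the
  K - w slots without a visible arrival, spread over the last w slots.\<close>

definition gap_rate :: "nat \<Rightarrow> real" where
  "gap_rate K = xi_batt Af B (K - w) / real (min K w)"

lemma gap_rate_nonneg: "0 \<le> gap_rate K"
  using xi_batt_bounds by (simp add: gap_rate_def)

lemma gap_rate_mult_le:
  assumes "m \<le> K" "m \<le> w"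
  shows "gap_rate K * real m \<le> B"
proof (cases "m = 0")
  case False
  then have "gap_rate K * real m \<le> gap_rate K * real (min K w)"
    using assms gap_rate_nonneg by (intro mult_left_mono) auto
  also have "\<dots> = xi_batt Af B (K - w)" using False assms by (simp add: gap_rate_def)
  finally show ?thesis using xi_batt_bounds by (meson order_trans)
qed (use B_nonneg in simp)

lemma gap_rate_le: "gap_rate K \<le> B"
  using gap_rate_mult_le[of 1 K] w_pos B_nonneg by (cases K) (auto simp: gap_rate_def)

lemma gap_rate_short: "K \<le> w \<Longrightarrow> gap_rate K = B / real K"
  by (simp add: gap_rate_def)

lemma gap_rate_long: "gap_rate (i + w) = xi_batt Af B i / real w"
  using w_pos by (simp add: gap_rate_def)

definition gap_action :: "nat \<Rightarrow> nat \<Rightarrow> real" where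
  "gap_action i m = (if m \<le> w then gap_rate (i + m) else Af (xi_batt Af B i))"

lemma gap_action_bounds: "0 \<le> gap_action i m \<and> gap_action i m \<le> B"
  using gap_rate_nonneg gap_rate_le xi_batt_bounds[of i] Af_bounds[of "xi_batt Af B i"]
  by (auto simp: gap_action_def)

text \<open>Slot n + 1 with age i and lead m; i = n means the battery still holds its initial charge
  (so e 1 is irrelevant).\<close>

definition gap_event :: "nat \<Rightarrow> nat \<Rightarrow> nat \<Rightarrow> (nat \<Rightarrow> bool) set" where
  "gap_event n i m = arrival_pattern
     ((if i < n then {n + 1 - i} else {}) \<union> (if m \<le> w then {n + 1 + m} else {}))
     {n + 2 - i..<n + 1 + m}"

lemma gap_event_iff:
  "e \<in> gap_event n i m \<longleftrightarrow> (i < n \<longrightarrow> e (n + 1 - i)) \<and> (m \<le> w \<longrightarrow> e (n + 1 + m))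
     \<and> (\<forall>t\<in>{n + 2 - i..<n + 1 + m}. \<not> e t)"
  by (auto simp: gap_event_def arrival_pattern_def)

lemma first_arrival_on_gap_event:
  assumes "e \<in> gap_event n i m" "1 \<le> m" "m \<le> w + 1"
  shows "first_arrival w e (Suc n) = (if m \<le> w then m else 0)"
  using assms by (intro first_arrival_eqI) (auto simp: gap_event_iff)

lemma gap_event_Suc:
  assumes "e \<in> gap_event (Suc n) (Suc i) m" "1 \<le> m"
  shows "e \<in> gap_event n i (if m < w then m + 1 else w + 1)" and "\<not> e (Suc (Suc n))"
  using assms by (auto simp: gap_event_iff)

lemma stat_batt_on_gap_event:
  "e \<in> gap_event n i m \<Longrightarrow> i \<le> n \<Longrightarrow> 1 \<le> m \<Longrightarrow> m \<le> w + 1 \<Longrightarrow>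
    stat_batt B w Af e n = (if m \<le> w then gap_rate (i + m) * real m else xi_batt Af B i)"
proof (induction n arbitrary: i m)
  case 0
  then show ?case using gap_rate_short[of m] by simp
next
  case (Suc n)
  show ?case
  proof (cases i)
    case 0
    then have "e (Suc (Suc n))"
      using Suc.prems by (simp add: gap_event_iff)
    then show ?thesis using 0 Suc.prems stat_batt_Suc_arrival gap_rate_short[of m] by simp
  next
    case (Suc i')
    define m' where "m' = (if m < w then m + 1 else w + 1)"
    have ev: "e \<in> gap_event n i' m'" and no_arrival: "\<not> e (Suc (Suc n))"
      using gap_event_Suc[of e n i' m] Suc.prems(1,3) \<open>i = Suc i'\<close> by (simp_all add: m'_def)
    have b: "stat_batt B w Af e n = (if m < w then gap_rate (i + m) * (1 + real m) else xi_batt Af B i')"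
      using Suc.IH[OF ev] Suc.prems \<open>i = Suc i'\<close> by (auto simp: m'_def)
    have a: "stat_policy B w Af (Suc n) e 0 = (if m < w then gap_rate (i + m) else Af (xi_batt Af B i'))"
      using first_arrival_on_gap_event[OF ev] b by (auto simp: m'_def stat_policy_def Let_def)
    note batt = stat_batt_Suc_no_arrival[of e n 0, OF no_arrival]
    show ?thesis
    proof (cases "m < w")
      case True
      then have "stat_batt B w Af e n - stat_policy B w Af (Suc n) e 0 = gap_rate (i + m) * real m"
        using a b by (simp add: algebra_simps)
      then show ?thesis using batt True gap_rate_mult_le[of m "i + m"] by simp
    next
      case False
      then have "stat_batt B w Af e n - stat_policy B w Af (Suc n) e 0 = xi_batt Af B i"
        using a b \<open>i = Suc i'\<close> by simp
      moreover have "m \<le> w \<Longrightarrow> gap_rate (i + m) * real m = xi_batt Af B i"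
        using False gap_rate_long[of i] w_pos by (cases "m = w") auto
      ultimately show ?thesis using batt xi_batt_bounds[of i] by simp
    qed
  qed
qed

lemma stat_policy_on_gap_event:
  assumes "e \<in> gap_event n i m" "i \<le> n" "1 \<le> m" "m \<le> w + 1"
  shows "stat_policy B w Af (Suc n) e s = gap_action i m"
  using stat_batt_on_gap_event[OF assms] first_arrival_on_gap_event[OF assms(1,3,4)] assms
  by (simp add: stat_policy_def gap_action_def Let_def)

lemma gap_event_exists: "\<exists>i\<le>n. \<exists>m\<in>{1..w+1}. e \<in> gap_event n i m"
proof -
  define P where "P i \<longleftrightarrow> i = n \<or> e (n + 1 - i)" for i
  define Q where "Q m \<longleftrightarrow> 1 \<le> m \<and> (m = w + 1 \<or> e (n + 1 + m))" for m
  define i where "i = (LEAST i. P i)"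
  define m where "m = (LEAST m. Q m)"
  have "P n" "Q (w + 1)" by (simp_all add: P_def Q_def)
  then have i: "i \<le> n" "P i" "\<And>i'. i' < i \<Longrightarrow> \<not> P i'"
    and m: "m \<le> w + 1" "Q m" "\<And>m'. m' < m \<Longrightarrow> \<not> Q m'"
    unfolding i_def m_def by (auto intro: Least_le LeastI dest: not_less_Least)
  have "\<not> e t" if "n + 2 - i \<le> t" "t < n + 1 + m" for t
  proof (cases "t \<le> n + 1")
    case True
    then show ?thesis using i(3)[of "n + 1 - t"] that by (simp add: P_def)
  next
    case False
    then show ?thesis using m(3)[of "t - (n + 1)"] that by (simp add: Q_def)
  qed
  moreover have "i < n \<Longrightarrow> e (n + 1 - i)" "m \<le> w \<Longrightarrow> e (n + 1 + m)"
    using i(2) m(2) by (auto simp: P_def Q_def)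
  ultimately have "e \<in> gap_event n i m" by (simp add: gap_event_iff)
  moreover have "m \<in> {1..w+1}" using m(1,2) by (simp add: Q_def)
  ultimately show ?thesis using i(1) by blast
qed

lemma gap_event_unique:
  assumes "e \<in> gap_event n i m" "e \<in> gap_event n i' m'" "1 \<le> m" "1 \<le> m'"
    and "i \<le> n" "i' \<le> n" "m \<le> w + 1" "m' \<le> w + 1"
  shows "i = i'" and "m = m'"
proof -
  have age: "\<not> i < i'" if "e \<in> gap_event n i m" "e \<in> gap_event n i' m'" "i' \<le> n" "1 \<le> m'"
    for i i' m m'
  proof
    assume "i < i'"
    then have "e (n + 1 - i)" "n + 1 - i \<in> {n + 2 - i'..<n + 1 + m'}"
      using that by (auto simp: gap_event_iff)
    then show False using that(2) by (auto simp: gap_event_iff)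
  qed
  show "i = i'" using age[OF assms(1,2)] age[OF assms(2,1)] assms(3,4,5,6) by simp
  have lead: "\<not> m < m'" if "e \<in> gap_event n i m" "e \<in> gap_event n i m'" "m' \<le> w + 1" "1 \<le> m"
    for m m'
  proof
    assume "m < m'"
    then have "e (n + 1 + m)" "n + 1 + m \<in> {n + 2 - i..<n + 1 + m'}"
      using that by (auto simp: gap_event_iff)
    then show False using that(2) by (auto simp: gap_event_iff)
  qed
  show "m = m'"
    using lead[OF assms(1) assms(2)[folded \<open>i = i'\<close>]] assms(2)[folded \<open>i = i'\<close>]
      lead[OF _ assms(1)] assms(3,4,7,8) by (meson linorder_neqE_nat)
qed

lemma sum_indicator_gap_events:
  assumes "e \<in> gap_event n i m" "i \<le> n" "m \<in> {1..w+1}"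
  shows "(\<Sum>i'\<le>n. \<Sum>m'\<in>{1..w+1}. indicator (gap_event n i' m') e * f i' m') = (f i m :: real)"
proof -
  have pointwise: "(case x of (i', m') \<Rightarrow> indicator (gap_event n i' m') e * f i' m')
      = (if x = (i, m) then f i m else 0)" if "x \<in> {..n} \<times> {1..w+1}" for x
  proof (cases "e \<in> gap_event n (fst x) (snd x)")
    case True
    then have "x = (i, m)"
      using gap_event_unique[OF True assms(1)] that assms(2,3) by (auto simp: prod_eq_iff)
    then show ?thesis using True by simp
  next
    case False
    then show ?thesis using assms(1) by (auto simp: case_prod_unfold)
  qed
  have "(\<Sum>i'\<le>n. \<Sum>m'\<in>{1..w+1}. indicator (gap_event n i' m') e * f i' m')
      = (\<Sum>x\<in>{..n} \<times> {1..w+1}. if x = (i, m) then f i m else 0)"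
    unfolding sum.cartesian_product by (rule sum.cong[OF refl pointwise])
  also have "\<dots> = f i m" using assms(2,3) by (subst sum.delta) auto
  finally show ?thesis .
qed

end

locale stationary_policy_throughput = stationary_policy +
  fixes p \<gamma> :: real
  assumes p_pos: "0 < p" and p_less_1: "p < 1" and gamma_nonneg: "0 \<le> \<gamma>"
begin

definition age_weight :: "nat \<Rightarrow> nat \<Rightarrow> real" where
  "age_weight n i = (if i < n then p else 1) * (1 - p) ^ i"

definition lead_weight :: "nat \<Rightarrow> real" where
  "lead_weight m = (if m \<le> w then p else 1) * (1 - p) ^ (m - 1)"

lemma gap_event_sets: "gap_event n i m \<in> sets (arrivals_measure p)"
  unfolding gap_event_def by (rule arrival_pattern_sets) auto

lemma measure_gap_event:
  assumes "i \<le> n" "1 \<le> m"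
  shows "measure (arrivals_measure p) (gap_event n i m) = age_weight n i * lead_weight m"
proof -
  let ?A = "(if i < n then {n + 1 - i} else {}) \<union> (if m \<le> w then {n + 1 + m} else {})"
  have "card ?A = (if i < n then 1 else 0) + (if m \<le> w then 1 else 0)"
    using assms by (auto simp: card_insert_if)
  moreover have "card {n + 2 - i..<n + 1 + m} = i + (m - 1)"
    using assms by simp
  ultimately have "measure (arrivals_measure p) (gap_event n i m)
      = p ^ ((if i < n then 1 else 0) + (if m \<le> w then 1 else 0)) * (1 - p) ^ (i + (m - 1))"
    unfolding gap_event_def using p_pos p_less_1
    by (subst measure_arrival_pattern) auto
  then show ?thesis
    by (simp add: age_weight_def lead_weight_def power_add)
qed

lemma sum_lead_weight: "(\<Sum>m\<in>{1..w+1}. lead_weight m) = 1"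
proof -
  have "(\<Sum>m\<in>{1..w}. lead_weight m) = (\<Sum>m\<in>{1..w}. p * (1 - p) ^ (m - 1))"
    by (intro sum.cong) (auto simp: lead_weight_def)
  also have "\<dots> = 1 - (1 - p) ^ w" by (rule sum_geometric_weights)
  finally show ?thesis by (simp add: lead_weight_def)
qed

lemma lead_weight_nonneg: "0 \<le> lead_weight m"
  using p_pos p_less_1 by (simp add: lead_weight_def)

definition slot_value :: "nat \<Rightarrow> real" where
  "slot_value i = (\<Sum>m\<in>{1..w+1}. lead_weight m * awgn_rate \<gamma> (gap_action i m))"

definition expected_reward :: "nat \<Rightarrow> real" where
  "expected_reward n = (\<Sum>i\<le>n. age_weight n i * slot_value i)"

definition limit_reward :: real where
  "limit_reward = (\<Sum>i. p * (1 - p) ^ i * slot_value i)"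

lemma awgn_rate_gap_action_bounds:
  "0 \<le> awgn_rate \<gamma> (gap_action i m) \<and> awgn_rate \<gamma> (gap_action i m) \<le> awgn_rate \<gamma> B"
  using awgn_rate_bounds gamma_nonneg gap_action_bounds by blast

lemma slot_value_bounds: "0 \<le> slot_value i \<and> slot_value i \<le> awgn_rate \<gamma> B"
proof
  show "0 \<le> slot_value i"
    unfolding slot_value_def using awgn_rate_gap_action_bounds lead_weight_nonneg
    by (intro sum_nonneg mult_nonneg_nonneg) auto
  have "slot_value i \<le> (\<Sum>m\<in>{1..w+1}. lead_weight m * awgn_rate \<gamma> B)"
    unfolding slot_value_def
    using awgn_rate_gap_action_bounds lead_weight_nonneg by (intro sum_mono mult_left_mono) auto
  also have "\<dots> = awgn_rate \<gamma> B"
    by (simp only: sum_distrib_right[symmetric] sum_lead_weight mult_1)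
  finally show "slot_value i \<le> awgn_rate \<gamma> B" .
qed

lemma reward_eq_sum_gap_events:
  "awgn_rate \<gamma> (stat_policy B w Af (Suc n) e s)
     = (\<Sum>i\<le>n. \<Sum>m\<in>{1..w+1}. indicator (gap_event n i m) e * awgn_rate \<gamma> (gap_action i m))"
proof -
  obtain i m where "i \<le> n" "m \<in> {1..w+1}" "e \<in> gap_event n i m"
    using gap_event_exists by blast
  then show ?thesis
    using sum_indicator_gap_events[of e n i m "\<lambda>i m. awgn_rate \<gamma> (gap_action i m)"]
      stat_policy_on_gap_event[of e n i m s] by simp
qed

lemma integral_sum_gap_events:
  "(\<integral>e. (\<Sum>i\<le>n. \<Sum>m\<in>{1..w+1}. indicator (gap_event n i m) e * c i m) \<partial>arrivals_measure p)
     = (\<Sum>i\<le>n. \<Sum>m\<in>{1..w+1}. measure (arrivals_measure p) (gap_event n i m) * (c i m :: real))"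
  and integrable_sum_gap_events:
  "integrable (arrivals_measure p)
     (\<lambda>e. \<Sum>i\<le>n. \<Sum>m\<in>{1..w+1}. indicator (gap_event n i m) e * c i m)"
proof -
  interpret prob_space "arrivals_measure p" by (rule prob_space_arrivals_measure)
  have indicator: "integrable (arrivals_measure p) (\<lambda>e. indicator (gap_event n i m) e * c i m)" for i m
    by (intro integrable_mult_left integrable_real_indicator gap_event_sets)
      (simp add: less_top[symmetric])
  then show "integrable (arrivals_measure p)
     (\<lambda>e. \<Sum>i\<le>n. \<Sum>m\<in>{1..w+1}. indicator (gap_event n i m) e * c i m)"
    by (intro Bochner_Integration.integrable_sum)
  have "(\<integral>e. (\<Sum>i\<le>n. \<Sum>m\<in>{1..w+1}. indicator (gap_event n i m) e * c i m) \<partial>arrivals_measure p)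
      = (\<Sum>i\<le>n. \<Sum>m\<in>{1..w+1}. \<integral>e. indicator (gap_event n i m) e * c i m \<partial>arrivals_measure p)"
    by (subst Bochner_Integration.integral_sum)
      (intro sum.cong refl Bochner_Integration.integral_sum Bochner_Integration.integrable_sum indicator)+
  also have "\<dots> = (\<Sum>i\<le>n. \<Sum>m\<in>{1..w+1}. measure (arrivals_measure p) (gap_event n i m) * c i m)"
    by (intro sum.cong refl) (simp add: gap_event_sets space_arrivals_measure)
  finally show "(\<integral>e. (\<Sum>i\<le>n. \<Sum>m\<in>{1..w+1}. indicator (gap_event n i m) e * c i m) \<partial>arrivals_measure p)
     = (\<Sum>i\<le>n. \<Sum>m\<in>{1..w+1}. measure (arrivals_measure p) (gap_event n i m) * c i m)" .
qed

lemma integrable_reward: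
  "integrable (arrivals_measure p) (\<lambda>e. awgn_rate \<gamma> (stat_policy B w Af (Suc n) e s))"
  unfolding reward_eq_sum_gap_events by (rule integrable_sum_gap_events)

lemma integral_reward:
  "(\<integral>e. awgn_rate \<gamma> (stat_policy B w Af (Suc n) e s) \<partial>arrivals_measure p) = expected_reward n"
  unfolding reward_eq_sum_gap_events integral_sum_gap_events expected_reward_def
    slot_value_def sum_distrib_left
  by (intro sum.cong refl) (simp add: measure_gap_event mult.assoc)

lemma avg_throughput_eq:
  "avg_throughput p \<gamma> (stat_policy B w Af) (return borel 0) T = (\<Sum>n<T. expected_reward n) / real T"
proof -
  interpret prob_space "arrivals_measure p" by (rule prob_space_arrivals_measure)
  define f where "f e = (\<Sum>n<T. awgn_rate \<gamma> (stat_policy B w Af (Suc n) e 0))" for e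
  have "(\<Sum>\<tau>=1..T. (1/2) * log 2 (1 + \<gamma> * stat_policy B w Af \<tau> e s)) = f e" for e s
    unfolding f_def by (simp add: sum.atLeast1_atMost_eq awgn_rate_def stat_policy_def)
  moreover have f_integrable: "integrable (arrivals_measure p) f"
    unfolding f_def by (intro Bochner_Integration.integrable_sum integrable_reward)
  ultimately have "avg_throughput p \<gamma> (stat_policy B w Af) (return borel 0) T
      = (1 / real T) * (\<integral>x. f (fst x) \<partial>(arrivals_measure p \<Otimes>\<^sub>M return borel (0::real)))"
    by (simp add: avg_throughput_def)
  also have "(\<integral>x. f (fst x) \<partial>(arrivals_measure p \<Otimes>\<^sub>M return borel (0::real)))
      = integral\<^sup>L (distr (arrivals_measure p \<Otimes>\<^sub>M return borel (0::real)) (arrivals_measure p) fst) f"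
    by (rule integral_distr[symmetric]) (auto intro: borel_measurable_integrable[OF f_integrable])
  also have "distr (arrivals_measure p \<Otimes>\<^sub>M return borel (0::real)) (arrivals_measure p) fst = arrivals_measure p"
    by (rule prob_space.distr_pair_fst) (simp add: prob_space_return)
  also have "integral\<^sup>L (arrivals_measure p) f = (\<Sum>n<T. expected_reward n)"
    unfolding f_def
    by (subst Bochner_Integration.integral_sum) (simp_all add: integral_reward integrable_reward)
  finally show ?thesis by simp
qed

lemma summable_geometric_multiple: "summable (\<lambda>i. c * (1 - p) ^ i)"
  using p_pos p_less_1 by (intro summable_mult summable_geometric) auto

lemma summable_geometric_bounded:
  assumes "0 \<le> c" "\<And>i. 0 \<le> r i \<and> r i \<le> H"
  shows "summable (\<lambda>i. c * (1 - p) ^ (i + k) * r i)"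
proof (rule summable_comparison_test[OF _ summable_geometric_multiple[of "c * H * (1 - p) ^ k"]])
  have "norm (c * (1 - p) ^ (i + k) * r i) \<le> c * H * (1 - p) ^ k * (1 - p) ^ i" for i
  proof -
    have "0 \<le> c * (1 - p) ^ (i + k)" using assms(1) p_less_1 by simp
    then have "0 \<le> c * (1 - p) ^ (i + k) * r i" "c * (1 - p) ^ (i + k) * r i \<le> c * (1 - p) ^ (i + k) * H"
      using assms(2)[of i] by (simp_all add: mult_left_mono)
    then show ?thesis by (simp add: power_add mult_ac)
  qed
  then show "\<exists>N. \<forall>i\<ge>N. norm (c * (1 - p) ^ (i + k) * r i) \<le> c * H * (1 - p) ^ k * (1 - p) ^ i"
    by blast
qed

lemma summable_reward_terms: "summable (\<lambda>i. p * (1 - p) ^ i * slot_value i)"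
  using summable_geometric_bounded[OF _ slot_value_bounds, of p 0] p_pos by simp

lemma abs_expected_reward_diff_le:
  "\<bar>expected_reward n - limit_reward\<bar> \<le> awgn_rate \<gamma> B * (1 - p) ^ n"
proof -
  let ?u = "\<lambda>i. p * (1 - p) ^ i * slot_value i"
  let ?H = "awgn_rate \<gamma> B"
  have "expected_reward n = (\<Sum>i<n. ?u i) + (1 - p) ^ n * slot_value n"
    unfolding expected_reward_def age_weight_def lessThan_Suc_atMost[symmetric]
    by (simp add: mult.assoc)
  moreover have "limit_reward = (\<Sum>j. ?u (j + n)) + (\<Sum>i<n. ?u i)"
    unfolding limit_reward_def by (rule suminf_split_initial_segment[OF summable_reward_terms])
  moreover have "(\<Sum>j. ?u (j + n)) \<le> (\<Sum>j. ?H * (1 - p) ^ n * p * (1 - p) ^ j)"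
  proof (rule suminf_le)
    show "?u (j + n) \<le> ?H * (1 - p) ^ n * p * (1 - p) ^ j" for j
      using slot_value_bounds[of "j + n"] p_pos p_less_1
      by (simp add: power_add mult_left_mono mult_ac)
  qed (rule summable_ignore_initial_segment[OF summable_reward_terms], rule summable_geometric_multiple)
  moreover have "(\<Sum>j. ?H * (1 - p) ^ n * p * (1 - p) ^ j) = ?H * (1 - p) ^ n"
    using p_pos p_less_1 by (simp add: suminf_mult suminf_geometric)
  moreover have "0 \<le> (\<Sum>j. ?u (j + n))"
    using slot_value_bounds p_pos p_less_1
    by (intro suminf_nonneg summable_ignore_initial_segment summable_reward_terms) simp
  moreover have "0 \<le> (1 - p) ^ n * slot_value n" "(1 - p) ^ n * slot_value n \<le> ?H * (1 - p) ^ n"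
    using slot_value_bounds[of n] p_less_1 by (simp_all add: mult_left_mono mult.commute)
  ultimately show ?thesis by linarith
qed

lemma long_run_throughput_eq:
  "long_run_throughput p \<gamma> (stat_policy B w Af) (return borel 0) = ereal limit_reward"
proof -
  have "summable (\<lambda>n. \<bar>expected_reward n - limit_reward\<bar>)"
    by (rule summable_comparison_test[OF _ summable_geometric_multiple])
      (use abs_expected_reward_diff_le in auto)
  then have "(\<lambda>T. avg_throughput p \<gamma> (stat_policy B w Af) (return borel 0) T) \<longlonglongrightarrow> limit_reward"
    unfolding avg_throughput_eq by (rule averages_tendsto_of_summable_abs_diff)
  then show ?thesis
    unfolding long_run_throughput_def by (intro lim_imp_Liminf tendsto_ereal) simp_all
qed

definition gap_term :: "nat \<Rightarrow> real" where
  "gap_term K = p\<^sup>2 * (1 - p) ^ (K - 1) * awgn_rate \<gamma> (gap_rate K)"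

lemma summable_gap_term: "summable gap_term"
proof -
  have "0 \<le> awgn_rate \<gamma> (gap_rate K) \<and> awgn_rate \<gamma> (gap_rate K) \<le> awgn_rate \<gamma> B" for K
    using awgn_rate_bounds gamma_nonneg gap_rate_nonneg gap_rate_le by blast
  then have "summable (\<lambda>K. gap_term (Suc K))"
    using summable_geometric_bounded[of "p\<^sup>2" "\<lambda>K. awgn_rate \<gamma> (gap_rate (Suc K))" "awgn_rate \<gamma> B" 0]
    by (simp add: gap_term_def)
  then show ?thesis by (simp only: summable_Suc_iff)
qed

definition blind_term :: "nat \<Rightarrow> real" where
  "blind_term i = p * (1 - p) ^ (i + w) * awgn_rate \<gamma> (xi_seq Af B (Suc i))"

lemma summable_blind_term: "summable blind_term"
proof -
  have "0 \<le> awgn_rate \<gamma> (xi_seq Af B (Suc i)) \<and> awgn_rate \<gamma> (xi_seq Af B (Suc i)) \<le> awgn_rate \<gamma> B" for i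
    using awgn_rate_gap_action_bounds[of i "w + 1"] by (simp add: gap_action_def xi_seq_def)
  then show ?thesis
    using summable_geometric_bounded[of p "\<lambda>i. awgn_rate \<gamma> (xi_seq Af B (Suc i))" "awgn_rate \<gamma> B" w] p_pos
    unfolding blind_term_def by simp
qed

lemma limit_reward_term_eq:
  "p * (1 - p) ^ i * slot_value i
     = (\<Sum>m\<in>{1..w}. gap_term (i + m)) + blind_term i"
proof -
  have "p * (1 - p) ^ i * (lead_weight m * awgn_rate \<gamma> (gap_action i m)) = gap_term (i + m)"
    if "m \<in> {1..w}" for m
  proof -
    have "(1 - p) ^ (i + m - 1) = (1 - p) ^ i * (1 - p) ^ (m - 1)"
      using that by (simp flip: power_add)
    then show ?thesis
      using that by (simp add: gap_term_def lead_weight_def gap_action_def power2_eq_square mult_ac)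
  qed
  then have "p * (1 - p) ^ i * (\<Sum>m\<in>{1..w}. lead_weight m * awgn_rate \<gamma> (gap_action i m))
      = (\<Sum>m\<in>{1..w}. gap_term (i + m))"
    unfolding sum_distrib_left by (rule sum.cong[OF refl])
  then show ?thesis
    by (simp add: slot_value_def lead_weight_def gap_action_def xi_seq_def blind_term_def
        algebra_simps power_add)
qed

lemma limit_reward_eq_T_inf: "limit_reward = T_inf p \<gamma> B w (xi_seq Af B)"
proof -
  have "limit_reward = (\<Sum>i. (\<Sum>m\<in>{1..w}. gap_term (i + m)) + blind_term i)"
    unfolding limit_reward_def limit_reward_term_eq ..
  also have "\<dots> = (\<Sum>i. \<Sum>m\<in>{1..w}. gap_term (i + m)) + (\<Sum>i. blind_term i)"
    by (intro suminf_add[symmetric] summable_sum summable_ignore_initial_segment summable_gap_term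
      summable_blind_term)
  also have "\<dots> = (\<Sum>k\<in>{1..w}. real k * gap_term k) + (\<Sum>n. real w * gap_term (n + w + 1)) + (\<Sum>i. blind_term i)"
  proof -
    have "real w * (\<Sum>n. gap_term (n + w + 1)) = (\<Sum>n. real w * gap_term (n + w + 1))"
      using summable_ignore_initial_segment[OF summable_gap_term, of "w + 1"] by (simp add: suminf_mult)
    then show ?thesis by (simp only: suminf_window_sum[OF summable_gap_term])
  qed
  also have "\<dots> = T_inf p \<gamma> B w (xi_seq Af B)"
  proof -
    have "(\<Sum>k\<in>{1..w}. real k * gap_term k)
        = (\<Sum>k=1..w. p\<^sup>2 * (1 - p) ^ (k - 1) * (real k / 2) * log 2 (1 + \<gamma> * B / real k))"
      using gap_rate_short by (intro sum.cong) (simp_all add: gap_term_def awgn_rate_def)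
    moreover have "(\<Sum>i. blind_term i)
        = (\<Sum>n. p * (1 - p) ^ (Suc n + w - 1) * (1/2) * log 2 (1 + \<gamma> * xi_seq Af B (Suc n)))"
      by (simp add: blind_term_def awgn_rate_def)
    moreover have "(\<Sum>n. real w * gap_term (n + w + 1))
        = (\<Sum>n. p\<^sup>2 * (1 - p) ^ (Suc n + w - 1) * (real w / 2)
            * log 2 (1 + \<gamma> * (B - (\<Sum>j=1..Suc n. xi_seq Af B j)) / real w))"
    proof (rule suminf_cong)
      fix n
      have "gap_rate (n + w + 1) = (B - (\<Sum>j=1..Suc n. xi_seq Af B j)) / real w"
        using gap_rate_long[of "Suc n"] unfolding xi_batt_eq_diff_sum by simp
      then show "real w * gap_term (n + w + 1) = p\<^sup>2 * (1 - p) ^ (Suc n + w - 1) * (real w / 2)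
          * log 2 (1 + \<gamma> * (B - (\<Sum>j=1..Suc n. xi_seq Af B j)) / real w)"
        by (simp add: gap_term_def awgn_rate_def)
    qed
    ultimately show ?thesis unfolding T_inf_def by linarith
  qed
  finally show ?thesis .
qed

end

theorem lemma1:
  fixes p \<gamma> B :: real and w :: nat and Af :: "real \<Rightarrow> real"
  assumes "0 < p" and "p < 1" and "0 < \<gamma>" and "0 < B" and "1 \<le> w"
    and "\<And>b. 0 \<le> b \<Longrightarrow> 0 \<le> Af b \<and> Af b \<le> b"
    and "is_policy B w (stat_policy B w Af) (return borel 0)"
    and "long_run_throughput p \<gamma> (stat_policy B w Af) (return borel 0)
           = opt_throughput p \<gamma> B w"
  shows "opt_throughput p \<gamma> B w = ereal (T_inf p \<gamma> B w (xi_seq Af B))"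
proof -
  interpret stationary_policy_throughput B w Af p \<gamma>
    using assms(1-6) by unfold_locales auto
  show ?thesis
    using assms(8) long_run_throughput_eq limit_reward_eq_T_inf by simp
qed

end
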